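(* Let $\Gamma$ be a scale on $\overline{\mathcal N}$ such that $\Gamma(x,\cdot)$ is continuous for every $x\in\overline{\mathcal N}$. Let $G$ denote the group $F(\mathcal N)$ equipped with the left-invariant metric $\delta_\Gamma$. Then for every $w\in\overline{\mathcal N}$ (viewed as an element of $F(\mathcal N)$) and every $r\in\mathbb R_+$, $\Gamma_G(w,r)\le\Gamma(w,r)$.
   Context: Free groups: for a nonempty set $X$, let $X^{-1}=\{x^{-1}:x\in X\}$ be a disjoint copy of $X$ and $e\notin X\cup X^{-1}$ a new symbol; put $\overline{X}=X\cup X^{-1}\cup\{e\}$, with $(x^{-1})^{-1}=x$ and $e^{-1}=e$. $W(X)$ is the set of nonempty finite words over $\overline X$, $|w|$ the length of $w$. A word is irreducible if it is $e$ or $x_0\cdots x_n$ with all $x_i\ne e$ and $x_i\ne x_{i+1}^{-1}$. The reduced word $w'$ of $w\in W(X)$ is obtained by repeatedly replacing occurrences of $xx^{-1}$ by $e$ and deleting $e$ from $w_1ew_2$ when $w_1$ or $w_2$ is nonempty. $F(X)$ is the set of irreducible words with product $u\cdot v=(u^\frown v)'$; it is the free group on $X$ with identity $e$. Metric on $\overline X$: if $d\le 1$ is a metric on $X$, extend it to $\overline X$ by $d(x^{-1},y^{-1})=d(x,y)$ and $d(x^{-1},y)=d(x,e)=d(x^{-1},e)=1$ for $x,y\in X$ (symmetric, $d(e,e)=0$). Match: for $m\le n$, a bijection $\theta$ of $\{m,\dots,n\}$ with $\theta^2=\mathrm{id}$ and no $i<j<\theta(i)<\theta(j)$. Scale: $\Gamma:\overline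 X\times\mathbb{R}_+\to\mathbb{R}_+$ such that for all $x\in\overline X$, $r\in\mathbb{R}_+$: (i) $\Gamma(e,r)=r$ and $\Gamma(x,r)\ge r$; (ii) $\Gamma(x,r)=0$ iff $r=0$; (iii) $\Gamma(x,\cdot)$ is monotone increasing; (iv) $\lim_{r\to0}\Gamma(x,r)=0$. Norms and metrics: for $w\in W(X)$ with $|w|=l+1$ and a match $\theta$ on $\{0,\dots,l\}$, define $N^\theta_\Gamma(w)$ by induction on $l$: if $l=0$ and $w=x$, $N^\theta_\Gamma(w)=d(e,x)$; if $l>0$ and $\theta(0)=k<l$, write $w=w_1^\frown w_2$ with $|w_1|=k+1$ and set $N^\theta_\Gamma(w)=N^{\theta\restriction\{0..k\}}_\Gamma(w_1)+N^{\theta\restriction\{k+1..l\}}_\Gamma(w_2)$; if $l>0$ and $\theta(0)=l$, write $w=x^{-1}w_1y$ with $x,y\in\overline X$ and set $N^\theta_\Gamma(w)=d(x,y)+\max\{\Gamma(x,N^{\theta_1}_\Gamma(w_1)),\Gamma(y,N^{\theta_1}_\Gamma(w_1))\}$ with $\theta_1=\theta\restriction\{1,\dots,l-1\}$ (and $N^{\theta_1}_\Gamma(w_1)=0$ if $w_1$ is empty). For $w\in F(X)$, $N_\Gamma(w)=\inf\{N^\theta_\Gamma(w^* ): w^*\in W(X),\ (w^* )'=w,\ \theta \text{ a match on }\{0,\dots,|w^*|-1\}\}$, and $\delta_\Gamma(u,v)=N_\Gamma(u^{-1}v)$, a left-invariant metric on $F(X)$. Scale of a group: for a topological group $G$ with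 compatible left-invariant metric $d_G$, $\Gamma_G(g,r)=\max\{r,\sup\{d_G(1_G,g^{-1}hg):d_G(1_G,h)\le r\}\}$. Baire space: $\mathcal N=\omega^\omega$ with metric $d(x,y)=\max\{2^{-n}:x(n)\ne y(n)\}$ ($d(x,x)=0$). *)

theory Defs
  imports "HOL-Analysis.Analysis" "HOL-Library.Extended_Real"
begin

datatype 'a letter = Gen 'a | Inv 'a | E

fun linv :: "'a letter \<Rightarrow> 'a letter" where
  "linv (Gen x) = Inv x"
| "linv (Inv x) = Gen x"
| "linv E = E"

definition irreducible :: "'a letter list \<Rightarrow> bool" where
  "irreducible w \<longleftrightarrow> w = [E] \<or>
     (w \<noteq> [] \<and> (\<forall>i<length w. w ! i \<noteq> E) \<and>
      (\<forall>i. Suc i < length w \<longrightarrow> w ! i \<noteq> linv (w ! Suc i)))"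

inductive red_step :: "'a letter list \<Rightarrow> 'a letter list \<Rightarrow> bool" where
  cancel: "red_step (u @ [x, linv x] @ v) (u @ [E] @ v)"
| dele: "u @ v \<noteq> [] \<Longrightarrow> red_step (u @ [E] @ v) (u @ v)"

definition reduced :: "'a letter list \<Rightarrow> 'a letter list" where
  "reduced w = (THE v. irreducible v \<and> red_step\<^sup>*\<^sup>* w v)"

definition FG :: "'a letter list set" where
  "FG = {w. irreducible w}"

definition fmult :: "'a letter list \<Rightarrow> 'a letter list \<Rightarrow> 'a letter list" where
  "fmult u v = reduced (u @ v)"

definition finv :: "'a letter list \<Rightarrow> 'a letter list" where
  "finv u = rev (map linv u)"

definition fone :: "'a letter list" where
  "fone = [E]"

fun ldist :: "('a \<Rightarrow> 'a \<Rightarrow> real) \<Rightarrow> 'a letter \<Rightarrow> 'a letter \<Rightarrow> real" where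
  "ldist d (Gen x) (Gen y) = d x y"
| "ldist d (Inv x) (Inv y) = d x y"
| "ldist d E E = 0"
| "ldist d _ _ = 1"

definition is_match :: "(nat \<Rightarrow> nat) \<Rightarrow> nat \<Rightarrow> nat \<Rightarrow> bool" where
  "is_match \<theta> m n \<longleftrightarrow> m \<le> n \<and> bij_betw \<theta> {m..n} {m..n} \<and>
     (\<forall>i\<in>{m..n}. \<theta> (\<theta> i) = i) \<and>
     \<not> (\<exists>i\<in>{m..n}. \<exists>j\<in>{m..n}. i < j \<and> j < \<theta> i \<and> \<theta> i < \<theta> j)"

definition is_scale :: "('a letter \<Rightarrow> real \<Rightarrow> real) \<Rightarrow> bool" where
  "is_scale \<Gamma> \<longleftrightarrow>
     (\<forall>r\<ge>0. \<Gamma> E r = r) \<and>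
     (\<forall>x. \<forall>r\<ge>0. \<Gamma> x r \<ge> r) \<and>
     (\<forall>x. \<forall>r\<ge>0. \<Gamma> x r = 0 \<longleftrightarrow> r = 0) \<and>
     (\<forall>x. mono_on {0..} (\<Gamma> x)) \<and>
     (\<forall>x. (\<Gamma> x \<longlongrightarrow> 0) (at_right 0))"

text \<open>\<open>NT d \<Gamma> \<theta> m w\<close> is N^theta_Gamma of the word w whose letters carry the
  indices m, ..., m + |w| - 1 (so the match theta is used on that index range).
  The value on the empty word is 0 (the convention for empty w_1).\<close>

function NT :: "('a \<Rightarrow> 'a \<Rightarrow> real) \<Rightarrow> ('a letter \<Rightarrow> real \<Rightarrow> real) \<Rightarrow> (nat \<Rightarrow> nat)
                 \<Rightarrow> nat \<Rightarrow> 'a letter list \<Rightarrow> real" where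
  "NT d \<Gamma> \<theta> m [] = 0"
| "NT d \<Gamma> \<theta> m [x] = ldist d E x"
| "NT d \<Gamma> \<theta> m (a # b # rest) =
     (let w = a # b # rest; l = length w - 1; k = \<theta> m in
      if k < m + l then
        NT d \<Gamma> \<theta> m (take (k - m + 1) w) + NT d \<Gamma> \<theta> (k + 1) (drop (k - m + 1) w)
      else
        (let x = linv a; y = last w; w1 = butlast (b # rest);
             n1 = NT d \<Gamma> \<theta> (m + 1) w1
         in ldist d x y + max (\<Gamma> x n1) (\<Gamma> y n1)))"
  by pat_completeness auto
termination
  by (relation "Wellfounded.measure (\<lambda>(_, _, _, _, w). length w)") (auto simp: min_def)

definition Nnorm :: "('a \<Rightarrow> 'a \<Rightarrow> real) \<Rightarrow> ('a letter \<Rightarrow> real \<Rightarrow> real)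
                      \<Rightarrow> 'a letter list \<Rightarrow> real" where
  "Nnorm d \<Gamma> w = Inf {NT d \<Gamma> \<theta> 0 ws | ws \<theta>. ws \<noteq> [] \<and> reduced ws = w \<and>
                                          is_match \<theta> 0 (length ws - 1)}"

definition delta :: "('a \<Rightarrow> 'a \<Rightarrow> real) \<Rightarrow> ('a letter \<Rightarrow> real \<Rightarrow> real)
                      \<Rightarrow> 'a letter list \<Rightarrow> 'a letter list \<Rightarrow> real" where
  "delta d \<Gamma> u v = Nnorm d \<Gamma> (fmult (finv u) v)"

definition group_scale :: "('a \<Rightarrow> 'a \<Rightarrow> real) \<Rightarrow> ('a letter \<Rightarrow> real \<Rightarrow> real)
                            \<Rightarrow> 'a letter list \<Rightarrow> real \<Rightarrow> ereal" where
  "group_scale d \<Gamma> g r = max (ereal r)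
     (SUP h \<in> {h \<in> FG. delta d \<Gamma> fone h \<le> r}.
        ereal (delta d \<Gamma> fone (fmult (fmult (finv g) h) g)))"

definition baire_dist :: "(nat \<Rightarrow> nat) \<Rightarrow> (nat \<Rightarrow> nat) \<Rightarrow> real" where
  "baire_dist x y = (if x = y then 0 else (1/2) ^ (LEAST n. x n \<noteq> y n))"

end

theory Submission
  imports Defs
begin

(* Let h have norm at most r and pick a representing word ws with match \<theta> whose value
   N^\<theta>(ws) is close to N(h). Enclosing ws between w^-1 and w, and matching these two new
   letters with each other while shifting \<theta> inside, represents w^-1 h w with value
   d(w,w) + \<Gamma>(w, N^\<theta>(ws)) = \<Gamma>(w, N^\<theta>(ws)). Monotonicity and right continuity of
   \<Gamma>(w,-) then give N(w^-1 h w) \<le> \<Gamma>(w, N(h)) \<le> \<Gamma>(w, r). Reduced words are well defined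
   because every rewriting sequence ends in the normal form computed by free cancellation. *)

lemma linv_linv [simp]: "linv (linv x) = x"
  by (cases x) auto

lemma linv_eq_E_iff [simp]: "linv x = E \<longleftrightarrow> x = E"
  by (cases x) auto

lemma linv_eq_iff: "linv x = y \<longleftrightarrow> x = linv y"
  by auto

fun cancel_cons :: "'a letter \<Rightarrow> 'a letter list \<Rightarrow> 'a letter list" where
  "cancel_cons x [] = [x]"
| "cancel_cons x (y # ys) = (if y = linv x then ys else x # y # ys)"

definition free_reduce :: "'a letter list \<Rightarrow> 'a letter list" where
  "free_reduce w = foldr cancel_cons w []"

fun freely_reduced :: "'a letter list \<Rightarrow> bool" where
  "freely_reduced (x # y # ys) \<longleftrightarrow> x \<noteq> linv y \<and> freely_reduced (y # ys)"
| "freely_reduced _ \<longleftrightarrow> True"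

lemma freely_reduced_iff:
  "freely_reduced w \<longleftrightarrow> (\<forall>i. Suc i < length w \<longrightarrow> w ! i \<noteq> linv (w ! Suc i))"
  by (induction w rule: freely_reduced.induct) (auto simp: nth_Cons split: nat.splits)

lemma freely_reduced_cancel_cons: "freely_reduced w \<Longrightarrow> freely_reduced (cancel_cons x w)"
  by (induction w rule: freely_reduced.induct) (auto simp: linv_eq_iff)

lemma freely_reduced_free_reduce: "freely_reduced (free_reduce w)"
  unfolding free_reduce_def by (induction w) (auto intro: freely_reduced_cancel_cons)

lemma cancel_cons_linv:
  "freely_reduced w \<Longrightarrow> cancel_cons x (cancel_cons (linv x) w) = w"
  by (induction w rule: freely_reduced.induct) auto

lemma free_reduce_append_cancel:
  "free_reduce (u @ x # linv x # v) = free_reduce (u @ v)"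
  using cancel_cons_linv[OF freely_reduced_free_reduce, of x v]
  by (simp add: free_reduce_def)

lemma free_reduce_freely_reduced: "freely_reduced w \<Longrightarrow> free_reduce w = w"
proof (induction w rule: freely_reduced.induct)
  case (1 x y ys)
  then show ?case
    by (simp add: free_reduce_def) (metis linv_linv)
qed (simp_all add: free_reduce_def)

definition word_nf :: "'a letter list \<Rightarrow> 'a letter list" where
  "word_nf w = (let v = free_reduce (filter (\<lambda>x. x \<noteq> E) w) in if v = [] then [E] else v)"

lemma word_nf_red_step: "red_step u v \<Longrightarrow> word_nf u = word_nf v"
proof (induction rule: red_step.induct)
  case (cancel u x v)
  then show ?case
    by (cases "x = E") (simp_all add: word_nf_def free_reduce_append_cancel)
qed (simp add: word_nf_def)

lemma word_nf_red_steps: "red_step\<^sup>*\<^sup>* u v \<Longrightarrow> word_nf u = word_nf v"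
  by (induction rule: rtranclp_induct) (simp_all add: word_nf_red_step)

lemma word_nf_irreducible:
  assumes "irreducible v"
  shows "word_nf v = v"
proof (cases "v = [E]")
  case False
  then have "v \<noteq> []" and "E \<notin> set v" and "freely_reduced v"
    using assms by (auto simp: irreducible_def freely_reduced_iff in_set_conv_nth)
  moreover from \<open>E \<notin> set v\<close> have "filter (\<lambda>x. x \<noteq> E) v = v"
    by (auto simp: filter_id_conv)
  ultimately show ?thesis
    by (simp add: word_nf_def free_reduce_freely_reduced)
qed (simp add: word_nf_def free_reduce_def)

lemma red_step_of_not_irreducible:
  assumes "w \<noteq> []" "\<not> irreducible w"
  obtains v where "red_step w v" "v \<noteq> []" "length v < length w"
proof -
  have "w \<noteq> [E]"
    using assms(2) by (auto simp: irreducible_def)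
  from assms consider i where "i < length w" "w ! i = E"
    | i where "Suc i < length w" "w ! i = linv (w ! Suc i)"
    by (auto simp: irreducible_def)
  then show thesis
  proof cases
    case (1 i)
    then have "w = take i w @ [E] @ drop (Suc i) w"
      by (metis id_take_nth_drop append_Cons append_Nil)
    moreover have "take i w @ drop (Suc i) w \<noteq> []"
      using 1 \<open>w \<noteq> [E]\<close> by (cases w; cases "tl w") auto
    ultimately show thesis
      using 1 by (intro that[of "take i w @ drop (Suc i) w"]) (metis red_step.dele, auto)
  next
    case (2 i)
    have "drop i w = [w ! i, w ! Suc i] @ drop (Suc (Suc i)) w"
      using 2(1) by (simp add: Cons_nth_drop_Suc)
    moreover have "w ! Suc i = linv (w ! i)"
      using 2(2) by simp
    ultimately have "drop i w = [w ! i, linv (w ! i)] @ drop (Suc (Suc i)) w"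
      by simp
    then have "w = take i w @ [w ! i, linv (w ! i)] @ drop (Suc (Suc i)) w"
      by (metis append_take_drop_id)
    then show thesis
      using 2 by (intro that[of "take i w @ [E] @ drop (Suc (Suc i)) w"]) (metis red_step.cancel, auto)
  qed
qed

lemma ex_irreducible_reduct:
  "w \<noteq> [] \<Longrightarrow> \<exists>v. irreducible v \<and> red_step\<^sup>*\<^sup>* w v"
proof (induction "length w" arbitrary: w rule: less_induct)
  case less
  show ?case
  proof (cases "irreducible w")
    case False
    with less.prems obtain u where "red_step w u" "u \<noteq> []" "length u < length w"
      by (rule red_step_of_not_irreducible)
    with less.hyps show ?thesis
      by (meson converse_rtranclp_into_rtranclp)
  qed blast
qed

lemma reduced_eq_word_nf:
  assumes "w \<noteq> []"
  shows "reduced w = word_nf w"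
proof -
  have "v = word_nf w" if "irreducible v" "red_step\<^sup>*\<^sup>* w v" for v
    using that word_nf_irreducible word_nf_red_steps by metis
  with ex_irreducible_reduct[OF assms] show ?thesis
    unfolding reduced_def by (metis (mono_tags, lifting) the_equality)
qed

lemma reduced_spec:
  assumes "w \<noteq> []"
  shows "irreducible (reduced w)" "red_step\<^sup>*\<^sup>* w (reduced w)"
  using ex_irreducible_reduct[OF assms] reduced_eq_word_nf[OF assms]
  by (metis word_nf_irreducible word_nf_red_steps)+

lemma irreducible_nonempty: "irreducible v \<Longrightarrow> v \<noteq> []"
  by (auto simp: irreducible_def)

lemma reduced_irreducible: "irreducible v \<Longrightarrow> reduced v = v"
  by (simp add: irreducible_nonempty reduced_eq_word_nf word_nf_irreducible)

lemma red_step_append: "red_step u v \<Longrightarrow> red_step (a @ u @ b) (a @ v @ b)"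
proof (induction rule: red_step.induct)
  case (cancel u x v)
  then show ?case
    using red_step.cancel[of "a @ u" x "v @ b"] by simp
next
  case (dele u v)
  then have "(a @ u) @ (v @ b) \<noteq> []"
    by auto
  then show ?case
    using red_step.dele[of "a @ u" "v @ b"] by simp
qed

lemma red_steps_append: "red_step\<^sup>*\<^sup>* u v \<Longrightarrow> red_step\<^sup>*\<^sup>* (a @ u @ b) (a @ v @ b)"
  by (induction rule: rtranclp_induct) (auto intro: rtranclp.rtrancl_into_rtrancl red_step_append)

lemma reduced_append_reduced:
  assumes "u \<noteq> []"
  shows "reduced (a @ reduced u @ b) = reduced (a @ u @ b)"
proof -
  have "reduced u \<noteq> []"
    by (rule irreducible_nonempty[OF reduced_spec(1)[OF assms]])
  moreover have "word_nf (a @ u @ b) = word_nf (a @ reduced u @ b)"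
    by (rule word_nf_red_steps[OF red_steps_append[OF reduced_spec(2)[OF assms]]])
  ultimately show ?thesis
    using assms by (simp add: reduced_eq_word_nf)
qed

lemma conj_letter_eq_reduced:
  assumes "ws \<noteq> []"
  shows "fmult (fmult (finv [w]) (reduced ws)) [w] = reduced (linv w # ws @ [w])"
  using reduced_append_reduced[of "[linv w] @ reduced ws" "[]" "[w]"]
    reduced_append_reduced[OF assms, of "[linv w]" "[w]"] assms
  by (simp add: fmult_def finv_def)

lemma word_nf_Cons_E: "word_nf (E # w) = word_nf w"
  by (simp add: word_nf_def)

lemma delta_fone: "irreducible h \<Longrightarrow> delta d \<Gamma> fone h = Nnorm d \<Gamma> h"
  by (simp add: delta_def fmult_def finv_def fone_def reduced_eq_word_nf word_nf_Cons_E
      word_nf_irreducible)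

lemma is_match_iff:
  "is_match \<theta> m n \<longleftrightarrow> m \<le> n \<and> (\<forall>i\<in>{m..n}. \<theta> i \<in> {m..n}) \<and>
     (\<forall>i\<in>{m..n}. \<theta> (\<theta> i) = i) \<and>
     \<not> (\<exists>i\<in>{m..n}. \<exists>j\<in>{m..n}. i < j \<and> j < \<theta> i \<and> \<theta> i < \<theta> j)"
proof -
  have "bij_betw \<theta> {m..n} {m..n}"
    if "\<forall>i\<in>{m..n}. \<theta> i \<in> {m..n}" "\<forall>i\<in>{m..n}. \<theta> (\<theta> i) = i"
    using that by (intro bij_betw_byWitness[where f' = \<theta>]) auto
  then show ?thesis
    unfolding is_match_def by (meson bij_betwE)
qed

lemma is_match_id: "is_match id 0 n"
  by (simp add: is_match_iff)

definition wrap_match :: "(nat \<Rightarrow> nat) \<Rightarrow> nat \<Rightarrow> nat \<Rightarrow> nat" where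
  "wrap_match \<theta> n i = (if i = 0 then Suc (Suc n) else if i = Suc (Suc n) then 0 else Suc (\<theta> (i - 1)))"

lemma wrap_match_Suc: "i \<le> n \<Longrightarrow> wrap_match \<theta> n (Suc i) = Suc (\<theta> i)"
  by (simp add: wrap_match_def)

lemma le_Suc_Suc_cases:
  fixes i n :: nat
  assumes "i \<le> Suc (Suc n)"
  obtains "i = 0" | k where "k \<le> n" "i = Suc k" | "i = Suc (Suc n)"
  using assms by (metis Suc_le_mono le_SucE not0_implies_Suc)

lemma is_match_wrap_match:
  assumes "is_match \<theta> 0 n"
  shows "is_match (wrap_match \<theta> n) 0 (Suc (Suc n))"
proof -
  let ?t = "wrap_match \<theta> n"
  have into: "\<And>i. i \<le> n \<Longrightarrow> \<theta> i \<le> n" and inv: "\<And>i. i \<le> n \<Longrightarrow> \<theta> (\<theta> i) = i"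
    using assms by (auto simp: is_match_iff)
  have noncrossing: "\<And>i j. j \<le> n \<Longrightarrow> i < j \<Longrightarrow> j < \<theta> i \<Longrightarrow> \<theta> i < \<theta> j \<Longrightarrow> False"
    using assms unfolding is_match_iff by force
  have range: "?t i \<le> Suc (Suc n)" if "i \<le> Suc (Suc n)" for i
    using that by (cases rule: le_Suc_Suc_cases) (simp_all add: wrap_match_def into le_SucI)
  have involution: "?t (?t i) = i" if "i \<le> Suc (Suc n)" for i
    using that by (cases rule: le_Suc_Suc_cases) (auto simp: wrap_match_def inv dest: into)
  have "False" if ij: "j \<le> Suc (Suc n)" "i < j" "j < ?t i" "?t i < ?t j" for i j
  proof -
    from ij(1,2) have "i \<le> Suc (Suc n)"
      by simp
    then show False
    proof (cases rule: le_Suc_Suc_cases)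
      case 1
      then show False
        using range[OF ij(1)] ij(4) by (simp add: wrap_match_def)
    next
      case (2 k)
      then obtain l where "j = Suc l" "l < n" "k < l" "l < \<theta> k"
        using ij into[of k] by (cases j) (auto simp: wrap_match_Suc)
      then show False
        using noncrossing[of l k] ij(4) 2 by (simp add: wrap_match_Suc)
    qed (use ij in simp)
  qed
  then show ?thesis
    unfolding is_match_iff using range involution by auto
qed

(* No match hypothesis is needed: the recursion only ever evaluates \<theta> below m + length w. *)
lemma NT_shift:
  assumes "\<And>i. i < m + length w \<Longrightarrow> \<theta>' (Suc i) = Suc (\<theta> i)"
  shows "NT d \<Gamma> \<theta>' (Suc m) w = NT d \<Gamma> \<theta> m w"
  using assms
proof (induction d \<Gamma> \<theta> m w rule: NT.induct)
  case (3 d \<Gamma> \<theta> m a b rest)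
  have shift_m: "\<theta>' (Suc m) = Suc (\<theta> m)"
    using "3.prems" by simp
  show ?case
  proof (cases "\<theta> m < m + Suc (length rest)")
    case True
    have "NT d \<Gamma> \<theta>' (Suc m) (take (\<theta> m - m + 1) (a # b # rest))
        = NT d \<Gamma> \<theta> m (take (\<theta> m - m + 1) (a # b # rest))"
      using True "3.prems" by (intro "3.IH"(1)) auto
    moreover have "NT d \<Gamma> \<theta>' (Suc (\<theta> m + 1)) (drop (\<theta> m - m + 1) (a # b # rest))
        = NT d \<Gamma> \<theta> (\<theta> m + 1) (drop (\<theta> m - m + 1) (a # b # rest))"
      using True "3.prems" by (intro "3.IH"(2)) auto
    ultimately show ?thesis
      using True by (simp add: shift_m Let_def)
  next
    case False
    have "NT d \<Gamma> \<theta>' (Suc (m + 1)) (butlast (b # rest)) = NT d \<Gamma> \<theta> (m + 1) (butlast (b # rest))"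
      using False "3.prems" by (intro "3.IH"(3)) (auto simp del: butlast.simps)
    then show ?thesis
      using False by (simp add: shift_m Let_def)
  qed
qed simp_all

lemma NT_enclosing_pair:
  assumes "m + Suc (length w) \<le> \<theta> m"
  shows "NT d \<Gamma> \<theta> m (a # w @ [b]) = ldist d (linv a) b
    + max (\<Gamma> (linv a) (NT d \<Gamma> \<theta> (Suc m) w)) (\<Gamma> b (NT d \<Gamma> \<theta> (Suc m) w))"
proof -
  obtain c rest where cr: "w @ [b] = c # rest"
    by (cases w) auto
  moreover have "length rest = length w"
    using arg_cong[OF cr, of length] by simp
  ultimately have "\<not> \<theta> m < m + (length (a # c # rest) - 1)"
    using assms by simp
  then have "NT d \<Gamma> \<theta> m (a # c # rest) = ldist d (linv a) (last (a # c # rest))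
    + max (\<Gamma> (linv a) (NT d \<Gamma> \<theta> (m + 1) (butlast (c # rest))))
        (\<Gamma> (last (a # c # rest)) (NT d \<Gamma> \<theta> (m + 1) (butlast (c # rest))))"
    unfolding NT.simps(3) Let_def by (rule if_not_P)
  moreover have "last (a # c # rest) = b" "butlast (c # rest) = w"
    using cr by (metis last_ConsR last_snoc list.distinct(1), metis butlast_snoc)
  ultimately show ?thesis
    using cr by simp
qed

lemma NT_wrap_match:
  assumes "length ws = Suc n" "ldist d w w = 0"
  shows "NT d \<Gamma> (wrap_match \<theta> n) 0 (linv w # ws @ [w]) = \<Gamma> w (NT d \<Gamma> \<theta> 0 ws)"
proof -
  have "NT d \<Gamma> (wrap_match \<theta> n) (Suc 0) ws = NT d \<Gamma> \<theta> 0 ws"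
    using assms(1) by (intro NT_shift) (simp add: wrap_match_Suc)
  then show ?thesis
    using assms by (simp add: NT_enclosing_pair wrap_match_def)
qed

lemma ldist_nonneg: "(\<And>x y. 0 \<le> d x y) \<Longrightarrow> 0 \<le> ldist d a b"
  by (cases a; cases b) auto

lemma NT_nonneg:
  assumes "\<And>x y. 0 \<le> d x y" and "\<And>x r. 0 \<le> r \<Longrightarrow> r \<le> \<Gamma> x r"
  shows "0 \<le> NT d \<Gamma> \<theta> m w"
  using assms
proof (induction d \<Gamma> \<theta> m w rule: NT.induct)
  case (3 d \<Gamma> \<theta> m a b rest)
  show ?case
  proof (cases "\<theta> m < m + Suc (length rest)")
    case True
    with "3.IH"(1,2) "3.prems" show ?thesis
      by (simp add: Let_def)
  next
    case False
    let ?n = "NT d \<Gamma> \<theta> (m + 1) (butlast (b # rest))"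
    have "0 \<le> ?n"
      using False "3.prems" by (intro "3.IH"(3)) (auto simp del: butlast.simps)
    then have "0 \<le> \<Gamma> (linv a) ?n"
      using "3.prems"(2) order.trans by blast
    with False "3.prems"(1) show ?thesis
      by (simp add: Let_def ldist_nonneg add_nonneg_nonneg le_max_iff_disj)
  qed
qed (simp_all add: ldist_nonneg)

lemma ldist_self: "(\<And>x. d x x = 0) \<Longrightarrow> ldist d x x = 0"
  by (cases x) auto

lemma Nnorm_le_NT:
  assumes "\<And>x y. 0 \<le> d x y" "\<And>x r. 0 \<le> r \<Longrightarrow> r \<le> \<Gamma> x r"
    and "ws \<noteq> []" "is_match \<theta> 0 (length ws - 1)"
  shows "Nnorm d \<Gamma> (reduced ws) \<le> NT d \<Gamma> \<theta> 0 ws"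
  unfolding Nnorm_def
proof (rule cInf_lower)
  show "bdd_below {NT d \<Gamma> \<theta> 0 ws | ws \<theta>. ws \<noteq> [] \<and> reduced ws = reduced ws' \<and>
      is_match \<theta> 0 (length ws - 1)}" for ws'
    using NT_nonneg[of d \<Gamma>, OF assms(1,2)] by (auto simp: bdd_below_def)
qed (use assms(3,4) in blast)

lemma Nnorm_values_nonempty:
  "irreducible h \<Longrightarrow>
    {NT d \<Gamma> \<theta> 0 ws | ws \<theta>. ws \<noteq> [] \<and> reduced ws = h \<and> is_match \<theta> 0 (length ws - 1)} \<noteq> {}"
  using irreducible_nonempty reduced_irreducible is_match_id by blast

lemma Nnorm_nonneg:
  assumes "\<And>x y. 0 \<le> d x y" "\<And>x r. 0 \<le> r \<Longrightarrow> r \<le> \<Gamma> x r" "irreducible h"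
  shows "0 \<le> Nnorm d \<Gamma> h"
  unfolding Nnorm_def
proof (rule cInf_greatest)
  show "{NT d \<Gamma> \<theta> 0 ws | ws \<theta>. ws \<noteq> [] \<and> reduced ws = h \<and> is_match \<theta> 0 (length ws - 1)} \<noteq> {}"
    using assms(3) by (rule Nnorm_values_nonempty)
qed (use NT_nonneg[of d \<Gamma>, OF assms(1,2)] in blast)

lemma Nnorm_approx:
  assumes "irreducible h" "Nnorm d \<Gamma> h < t"
  obtains ws \<theta> where "ws \<noteq> []" "reduced ws = h" "is_match \<theta> 0 (length ws - 1)"
    "NT d \<Gamma> \<theta> 0 ws < t"
  using cInf_lessD[OF Nnorm_values_nonempty[OF assms(1)]] assms(2) that
  unfolding Nnorm_def by blast

lemma Nnorm_conj_letter_le_NT: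
  assumes "\<And>x y. 0 \<le> d x y" "\<And>x r. 0 \<le> r \<Longrightarrow> r \<le> \<Gamma> x r" "ldist d w w = 0"
    and "ws \<noteq> []" "is_match \<theta> 0 (length ws - 1)"
  shows "Nnorm d \<Gamma> (fmult (fmult (finv [w]) (reduced ws)) [w]) \<le> \<Gamma> w (NT d \<Gamma> \<theta> 0 ws)"
proof -
  let ?n = "length ws - 1"
  have "Nnorm d \<Gamma> (reduced (linv w # ws @ [w])) \<le> NT d \<Gamma> (wrap_match \<theta> ?n) 0 (linv w # ws @ [w])"
    using is_match_wrap_match[OF assms(5)] assms(4)
    by (intro Nnorm_le_NT[OF assms(1,2)]) simp_all
  also have "\<dots> = \<Gamma> w (NT d \<Gamma> \<theta> 0 ws)"
    using assms(3,4) by (intro NT_wrap_match) simp_all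
  finally show ?thesis
    using conj_letter_eq_reduced[OF assms(4)] by simp
qed

lemma le_at_right_continuous:
  fixes f :: "real \<Rightarrow> real"
  assumes "continuous_on {0..} f" "0 \<le> a" "\<And>e. 0 < e \<Longrightarrow> x \<le> f (a + e)"
  shows "x \<le> f a"
proof (rule tendsto_le[OF trivial_limit_at_right_real])
  have "(f \<longlongrightarrow> f a) (at a within {0..})"
    using assms(1,2) by (simp add: continuous_on_def)
  then show "(f \<longlongrightarrow> f a) (at_right a)"
    by (rule tendsto_within_subset) (use assms(2) in auto)
  show "\<forall>\<^sub>F y in at_right a. x \<le> f y"
    using assms(3)[of "y - a" for y] by (auto simp: eventually_at_right_less eventually_at_filter)
qed simp

lemma Nnorm_conj_letter_le:
  assumes "\<And>x y. 0 \<le> d x y" "\<And>x r. 0 \<le> r \<Longrightarrow> r \<le> \<Gamma> x r" "ldist d w w = 0"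
    and "mono_on {0..} (\<Gamma> w)" "continuous_on {0..} (\<Gamma> w)" "irreducible h"
  shows "Nnorm d \<Gamma> (fmult (fmult (finv [w]) h) [w]) \<le> \<Gamma> w (Nnorm d \<Gamma> h)"
proof (rule le_at_right_continuous[OF assms(5)])
  show "0 \<le> Nnorm d \<Gamma> h"
    using assms(1,2,6) by (rule Nnorm_nonneg)
  fix e :: real
  assume "0 < e"
  then obtain ws \<theta> where ws: "ws \<noteq> []" "reduced ws = h" "is_match \<theta> 0 (length ws - 1)"
    and approx: "NT d \<Gamma> \<theta> 0 ws < Nnorm d \<Gamma> h + e"
    using Nnorm_approx[OF assms(6)] by (metis less_add_same_cancel1)
  have "Nnorm d \<Gamma> (fmult (fmult (finv [w]) h) [w]) \<le> \<Gamma> w (NT d \<Gamma> \<theta> 0 ws)"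
    using Nnorm_conj_letter_le_NT[OF assms(1-3) ws(1,3)] ws(2) by simp
  also have "\<dots> \<le> \<Gamma> w (Nnorm d \<Gamma> h + e)"
    using mono_onD[OF assms(4)] approx NT_nonneg[of d \<Gamma>, OF assms(1,2)] by auto
  finally show "Nnorm d \<Gamma> (fmult (fmult (finv [w]) h) [w]) \<le> \<Gamma> w (Nnorm d \<Gamma> h + e)" .
qed

theorem group_scale_letter_le:
  assumes "\<And>x. d x x = 0" "\<And>x y. 0 \<le> d x y"
    and "is_scale \<Gamma>" "continuous_on {0..} (\<Gamma> w)" "0 \<le> r"
  shows "group_scale d \<Gamma> [w] r \<le> ereal (\<Gamma> w r)"
proof -
  have scale_ge: "\<And>x r. 0 \<le> r \<Longrightarrow> r \<le> \<Gamma> x r" and mono: "mono_on {0..} (\<Gamma> w)"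
    using assms(3) by (auto simp: is_scale_def)
  have "delta d \<Gamma> fone (fmult (fmult (finv [w]) h) [w]) \<le> \<Gamma> w r"
    if "irreducible h" "delta d \<Gamma> fone h \<le> r" for h
  proof -
    have "irreducible (fmult (fmult (finv [w]) h) [w])"
      by (simp add: fmult_def reduced_spec(1))
    then have "delta d \<Gamma> fone (fmult (fmult (finv [w]) h) [w])
        = Nnorm d \<Gamma> (fmult (fmult (finv [w]) h) [w])"
      by (rule delta_fone)
    also have "\<dots> \<le> \<Gamma> w (Nnorm d \<Gamma> h)"
      by (rule Nnorm_conj_letter_le[of d \<Gamma>, OF assms(2) scale_ge ldist_self[OF assms(1)]
            mono assms(4) that(1)])
    also have "\<dots> \<le> \<Gamma> w r"
    proof (rule mono_onD[OF mono])
      show "Nnorm d \<Gamma> h \<le> r"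
        using that delta_fone by metis
    qed (use Nnorm_nonneg[of d \<Gamma>, OF assms(2) scale_ge that(1)] assms(5) in auto)
    finally show ?thesis .
  qed
  then have "(SUP h \<in> {h \<in> FG. delta d \<Gamma> fone h \<le> r}.
      ereal (delta d \<Gamma> fone (fmult (fmult (finv [w]) h) [w]))) \<le> ereal (\<Gamma> w r)"
    by (intro SUP_least) (simp add: FG_def)
  then show ?thesis
    unfolding group_scale_def using scale_ge[OF assms(5)] by simp
qed

lemma baire_dist_self: "baire_dist x x = 0"
  by (simp add: baire_dist_def)

lemma baire_dist_nonneg: "0 \<le> baire_dist x y"
  by (simp add: baire_dist_def)

theorem lemma3p3:
  fixes \<Gamma> :: "(nat \<Rightarrow> nat) letter \<Rightarrow> real \<Rightarrow> real"
    and w :: "(nat \<Rightarrow> nat) letter" and r :: real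
  assumes "is_scale \<Gamma>"
    and "\<And>x. continuous_on {0..} (\<Gamma> x)"
    and "r \<ge> 0"
  shows "group_scale baire_dist \<Gamma> [w] r \<le> ereal (\<Gamma> w r)"
  using baire_dist_self baire_dist_nonneg assms by (rule group_scale_letter_le)

end
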